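(* Let $q$ be a prime power and let $r$ be a prime dividing $q-1$. Then for any positive integer $d$ and any integer $1\le k\le r^d-1$, there exists a polynomial $f\in\mathbb{F}_q[x]$ of degree $k$ that divides $x^{r^d}-1$ and satisfies $f(1)\neq 0$. *)

theory Defs
  imports "HOL-Computational_Algebra.Polynomial"
begin

end

theory Submission
  imports Defs
begin

text \<open>
  Since r divides q - 1, the polynomial X^r - 1 divides X^(q-1) - 1, which vanishes on all of
  the q - 1 units, so X^r - 1 has r distinct roots in F_q. Products of the linear factors X - z
  over roots z \<noteq> 1 give, for every j < r, a polynomial h of degree j with h(1) \<noteq> 0 and
  h(X)(X - 1) dividing X^r - 1. Substituting X^M gives h(X^M)(X^M - 1) dividing X^(rM) - 1, so
  with M = r^d and k = jM + s, s < M, a divisor g of X^M - 1 of degree s (by induction on d)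
  yields the divisor g(X) h(X^M) of X^(r^(d+1)) - 1 of degree k.
\<close>

lemma finite_field_power_card_minus_1:
  fixes x :: "'a::{field,finite}"
  assumes "x \<noteq> 0"
  shows "x ^ (card (UNIV :: 'a set) - 1) = 1"
proof -
  have "(\<Prod>y\<in>UNIV-{0}. x * y) = x ^ (card (UNIV :: 'a set) - 1) * \<Prod>(UNIV-{0::'a})"
    by (simp add: prod.distrib mult_ac)
  moreover have "(\<Prod>y\<in>UNIV-{0}. x * y) = (\<Prod>y\<in>UNIV-{0::'a}. y)"
    by (rule prod.reindex_bij_witness[of _ "\<lambda>y. y / x" "\<lambda>y. x * y"]) (use assms in auto)
  moreover have "\<Prod>(UNIV-{0::'a}) \<noteq> 0"
    by simp
  ultimately show ?thesis
    by (metis mult_cancel_right1)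
qed

lemma degree_X_pow_minus_1:
  assumes "n > 0"
  shows "degree ([:0,1:] ^ n - 1 :: 'a::idom poly) = n"
proof -
  have "degree ([:0,1:] ^ n + (-1) :: 'a poly) = degree ([:0,1::'a:] ^ n)"
    by (rule degree_add_eq_left) (use assms in \<open>simp add: degree_power_eq\<close>)
  then show ?thesis
    by (simp add: degree_power_eq)
qed

lemma card_roots_eq_degree_if_dvd:
  fixes p q :: "'a::idom poly"
  assumes "p dvd q" and "q \<noteq> 0" and "card {x. poly q x = 0} = degree q"
  shows "card {x. poly p x = 0} = degree p"
proof -
  obtain s where q: "q = p * s"
    using assms(1) by (elim dvdE)
  have "p \<noteq> 0" "s \<noteq> 0"
    using assms(2) q by auto
  have "{x. poly q x = 0} = {x. poly p x = 0} \<union> {x. poly s x = 0}"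
    using q by auto
  then have "degree q \<le> card {x. poly p x = 0} + card {x. poly s x = 0}"
    using assms(3) card_Un_le by metis
  moreover have "card {x. poly p x = 0} \<le> degree p" "card {x. poly s x = 0} \<le> degree s"
    using card_poly_roots_bound \<open>p \<noteq> 0\<close> \<open>s \<noteq> 0\<close> by blast+
  moreover have "degree q = degree p + degree s"
    using q degree_mult_eq \<open>p \<noteq> 0\<close> \<open>s \<noteq> 0\<close> by blast
  ultimately show ?thesis
    by linarith
qed

lemma card_roots_of_unity:
  assumes "r dvd card (UNIV :: 'a::{field,finite} set) - 1"
  shows "card {a::'a. a ^ r = 1} = r"
proof -
  define Q where "Q = card (UNIV :: 'a set) - 1"
  have "card (UNIV :: 'a set) \<ge> 2"
    using card_mono[of "UNIV :: 'a set" "{0, 1}"] by simp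
  then have "Q > 0"
    by (simp add: Q_def)
  then have "r > 0"
    using assms Q_def by (auto intro: Nat.gr0I)
  have "{x::'a. poly ([:0,1:] ^ Q - 1) x = 0} = UNIV - {0}"
    using finite_field_power_card_minus_1 \<open>Q > 0\<close> by (auto simp: Q_def power_0_left)
  then have card_Q: "card {x::'a. poly ([:0,1:] ^ Q - 1) x = 0} = degree ([:0,1::'a:] ^ Q - 1)"
    using \<open>Q > 0\<close> by (simp add: card_Diff_singleton degree_X_pow_minus_1 Q_def)
  obtain m where "Q = r * m"
    using assms Q_def by (auto simp: dvd_def)
  then have "[:0,1:] ^ r - 1 dvd ([:0,1::'a:] ^ Q - 1)"
    using power_diff_1_eq[of "[:0,1::'a:] ^ r" m] by (simp add: power_mult)
  moreover have "[:0,1:] ^ Q - 1 \<noteq> (0 :: 'a poly)"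
    using degree_X_pow_minus_1[OF \<open>Q > 0\<close>] \<open>Q > 0\<close> by (metis degree_0 less_irrefl)
  ultimately have "card {x::'a. poly ([:0,1:] ^ r - 1) x = 0} = degree ([:0,1::'a:] ^ r - 1)"
    using card_Q by (rule card_roots_eq_degree_if_dvd)
  then show ?thesis
    using degree_X_pow_minus_1[OF \<open>r > 0\<close>] by simp
qed

lemma prod_linear_factors_dvd:
  fixes p :: "'a::idom poly"
  assumes "finite B" and "\<forall>a\<in>B. poly p a = 0"
  shows "(\<Prod>a\<in>B. [:-a,1:]) dvd p"
  using assms
proof (induction B arbitrary: p rule: finite_induct)
  case empty
  then show ?case by simp
next
  case (insert b B)
  have "(\<Prod>a\<in>B. [:-a,1:]) dvd p"
    using insert.IH insert.prems by simp
  then obtain q where q: "p = (\<Prod>a\<in>B. [:-a,1:]) * q" ..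
  have "poly (\<Prod>a\<in>B. [:-a,1:]) b \<noteq> 0"
    using insert.hyps by (auto simp: poly_prod)
  with q insert.prems have "poly q b = 0"
    by simp
  then have "[:-b,1:] * (\<Prod>a\<in>B. [:-a,1:]) dvd (\<Prod>a\<in>B. [:-a,1:]) * q"
    by (metis poly_eq_0_iff_dvd mult.commute mult_dvd_mono dvd_refl)
  then show ?case
    using insert.hyps q by simp
qed

lemma divisor_of_X_pow_minus_1_div_X_minus_1:
  fixes r j :: nat
  assumes "r \<le> card {a::'a::idom. a ^ r = 1}" and "j < r"
  shows "\<exists>h :: 'a poly. degree h = j \<and> poly h 1 \<noteq> 0 \<and> h * [:-1,1:] dvd [:0,1:] ^ r - 1"
proof -
  let ?R = "{a::'a. a ^ r = 1}"
  have "j \<le> card (?R - {1})"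
    using assms by (simp add: card_Diff_singleton)
  then obtain B where B: "B \<subseteq> ?R - {1}" "card B = j" "finite B"
    by (rule obtain_subset_with_card_n)
  define h where "h = (\<Prod>a\<in>B. [:-a,1::'a:])"
  have "degree h = j"
    unfolding h_def using B by (subst degree_prod_eq_sum_degree) auto
  moreover have "poly h 1 \<noteq> 0"
    unfolding h_def using B by (auto simp: poly_prod)
  moreover have "h * [:-1,1:] = (\<Prod>a\<in>insert 1 B. [:-a,1::'a:])"
    unfolding h_def using B by (subst prod.insert) (auto simp: mult.commute)
  moreover have "(\<Prod>a\<in>insert 1 B. [:-a,1::'a:]) dvd [:0,1:] ^ r - 1"
    using B by (intro prod_linear_factors_dvd) auto
  ultimately show ?thesis
    by metis
qed

lemma pcompose_power_left: "pcompose (p ^ n) q = pcompose p q ^ n"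
  for p q :: "'a::comm_semiring_1 poly"
  by (induct n) (simp_all add: pcompose_1 pcompose_mult)

lemma pcompose_dvd_pcompose:
  fixes p q s :: "'a::comm_semiring_1 poly"
  assumes "p dvd q"
  shows "pcompose p s dvd pcompose q s"
  using assms by (auto simp: pcompose_mult)

lemma pcompose_X_minus_1: "pcompose [:-1,1:] q = q - (1::'a::comm_ring_1 poly)"
  by (simp add: pcompose_pCons one_pCons)

lemma pcompose_X_pow_minus_1:
  "pcompose ([:0,1:] ^ r - 1) ([:0,1:] ^ M) = [:0,1::'a::comm_ring_1:] ^ (r * M) - 1"
  by (simp add: pcompose_diff pcompose_power_left pcompose_1 pcompose_pCons power_mult mult.commute)

lemma mult_pcompose_X_pow_dvd_X_pow_minus_1:
  fixes g h :: "'a::comm_ring_1 poly"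
  assumes "g dvd [:0,1:] ^ M - 1" and "h * [:-1,1:] dvd [:0,1:] ^ r - 1"
  shows "g * pcompose h ([:0,1:] ^ M) dvd [:0,1:] ^ (r * M) - 1"
proof -
  have "pcompose (h * [:-1,1:]) ([:0,1:] ^ M) dvd pcompose ([:0,1:] ^ r - 1) ([:0,1:] ^ M)"
    using assms(2) by (rule pcompose_dvd_pcompose)
  then have "pcompose h ([:0,1:] ^ M) * ([:0,1:] ^ M - 1) dvd [:0,1:] ^ (r * M) - 1"
    by (simp only: pcompose_mult pcompose_X_minus_1 pcompose_X_pow_minus_1)
  moreover have "g * pcompose h ([:0,1:] ^ M) dvd pcompose h ([:0,1:] ^ M) * ([:0,1:] ^ M - 1)"
    using assms(1) by (simp add: mult.commute mult_dvd_mono)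
  ultimately show ?thesis
    using dvd_trans by blast
qed

lemma exists_divisor_X_pow_minus_1:
  fixes r d k :: nat
  assumes "r \<le> card {a::'a::idom. a ^ r = 1}" and "k < r ^ d"
  shows "\<exists>f :: 'a poly. degree f = k \<and> f dvd [:0,1:] ^ (r ^ d) - 1 \<and> poly f 1 \<noteq> 0"
  using assms(2)
proof (induction d arbitrary: k)
  case 0
  then show ?case
    by (intro exI[of _ 1]) simp
next
  case (Suc d)
  define M where "M = r ^ d"
  have "k < r * M"
    using Suc.prems by (simp add: M_def)
  then have "M > 0"
    by (intro Nat.gr0I) simp
  with \<open>k < r * M\<close> have "k div M < r"
    by (simp add: div_less_iff_less_mult mult.commute)
  obtain g :: "'a poly" where g: "degree g = k mod M" "g dvd [:0,1:] ^ M - 1" "poly g 1 \<noteq> 0"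
    using Suc.IH[of "k mod M"] \<open>M > 0\<close> M_def by auto
  obtain h :: "'a poly" where
    h: "degree h = k div M" "poly h 1 \<noteq> 0" "h * [:-1,1:] dvd [:0,1:] ^ r - 1"
    using divisor_of_X_pow_minus_1_div_X_minus_1[OF assms(1) \<open>k div M < r\<close>] by blast
  define H where "H = pcompose h ([:0,1:] ^ M)"
  have "poly H 1 \<noteq> 0"
    using h(2) by (simp add: H_def poly_pcompose)
  then have "poly (g * H) 1 \<noteq> 0" and "g \<noteq> 0" and "H \<noteq> 0"
    using g(3) by auto
  moreover have "degree (g * H) = k"
  proof -
    have "degree (g * H) = degree g + degree h * M"
      using \<open>g \<noteq> 0\<close> \<open>H \<noteq> 0\<close> by (simp add: H_def degree_mult_eq degree_pcompose degree_power_eq)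
    then show ?thesis
      using g(1) h(1) by (simp add: mod_div_mult_eq)
  qed
  moreover have "g * H dvd [:0,1:] ^ (r ^ Suc d) - 1"
    using mult_pcompose_X_pow_dvd_X_pow_minus_1[OF g(2) h(3)] by (simp add: H_def M_def)
  ultimately show ?case
    by blast
qed

theorem lemma5p4:
  fixes r d k :: nat
  assumes "prime r"
    and "r dvd card (UNIV :: 'a::{field,finite} set) - 1"
    and "d > 0"
    and "1 \<le> k" and "k \<le> r ^ d - 1"
  shows "\<exists>f :: 'a poly. degree f = k \<and> f dvd (monom 1 (r ^ d) - 1) \<and> poly f 1 \<noteq> 0"
proof -
  have "r \<le> card {a::'a. a ^ r = 1}"
    using card_roots_of_unity[OF assms(2)] by simp
  moreover have "k < r ^ d"
    using assms(4,5) by linarith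
  ultimately show ?thesis
    using exists_divisor_X_pow_minus_1 by (simp add: monom_altdef)
qed

end
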